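(* For every $[0,1]_{\text{Ł}}$-Kripke model $\mathfrak{M}=\langle W_{\mathfrak{M}},R_{\mathfrak{M}},e_{\mathfrak{M}}\rangle$ there exist a witnessed $[0,1]_{\text{Ł}}$-Kripke model $\mathfrak{N}=\langle W_{\mathfrak{N}},R_{\mathfrak{N}},e_{\mathfrak{N}}\rangle$ and a map $h\colon W_{\mathfrak{M}}\to W_{\mathfrak{N}}$ such that $e_{\mathfrak{M}}(v,\varphi)=e_{\mathfrak{N}}(h(v),\varphi)$ for every modal formula $\varphi$ and every $v\in W_{\mathfrak{M}}$.
   Context: $[0,1]_{\text{Ł}}$ is the standard MV-algebra on $[0,1]$ with $\wedge=\min$, $\vee=\max$, $a\cdot b=\max\{0,a+b-1\}$, $a\to b=\min\{1,1-a+b\}$, constants $0,1$. Modal formulas are built from propositional variables with $\wedge,\vee,\cdot,\to,0,1,\Box,\Diamond$. A $[0,1]_{\text{Ł}}$-Kripke model is $\langle W,R,e\rangle$ with $W\neq\emptyset$, $R\subseteq W\times W$ (crisp), $e$ assigning a value in $[0,1]$ to each variable at each world, extended world-wise homomorphically and by $e(v,\Box\varphi)=\inf_{Rvw}e(w,\varphi)$, $e(v,\Diamond\varphi)=\sup_{Rvw}e(w,\varphi)$ (with $\inf\emptyset=1$, $\sup\emptyset=0$). The model is witnessed if for every formula $\mathtt{M}\varphi$ with $\mathtt{M}\in\{\Box,\Diamond\}$ and every $v\in W$ there is $w$ with $Rvw$ and $e(v,\mathtt{M}\varphi)=e(w,\varphi)$. *)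

theory Defs
  imports Complex_Main
begin

datatype 'v fm =
    Var 'v
  | Zero
  | One
  | Meet "'v fm" "'v fm"
  | Join "'v fm" "'v fm"
  | Prod "'v fm" "'v fm"
  | Imp  "'v fm" "'v fm"
  | Box  "'v fm"
  | Dia  "'v fm"

definition kripke_model :: "'w set \<Rightarrow> ('w \<times> 'w) set \<Rightarrow> ('w \<Rightarrow> 'v \<Rightarrow> real) \<Rightarrow> bool" where
  "kripke_model W R e \<longleftrightarrow> W \<noteq> {} \<and> R \<subseteq> W \<times> W \<and>
     (\<forall>w\<in>W. \<forall>p. 0 \<le> e w p \<and> e w p \<le> 1)"

fun ev :: "('w \<times> 'w) set \<Rightarrow> ('w \<Rightarrow> 'v \<Rightarrow> real) \<Rightarrow> 'w \<Rightarrow> 'v fm \<Rightarrow> real" where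
  "ev R e w (Var p) = e w p"
| "ev R e w Zero = 0"
| "ev R e w One = 1"
| "ev R e w (Meet a b) = min (ev R e w a) (ev R e w b)"
| "ev R e w (Join a b) = max (ev R e w a) (ev R e w b)"
| "ev R e w (Prod a b) = max 0 (ev R e w a + ev R e w b - 1)"
| "ev R e w (Imp a b) = min 1 (1 - ev R e w a + ev R e w b)"
| "ev R e w (Box a) =
     (if {u. (w, u) \<in> R} = {} then 1 else (INF u\<in>{u. (w, u) \<in> R}. ev R e u a))"
| "ev R e w (Dia a) =
     (if {u. (w, u) \<in> R} = {} then 0 else (SUP u\<in>{u. (w, u) \<in> R}. ev R e u a))"

definition witnessed :: "'w set \<Rightarrow> ('w \<times> 'w) set \<Rightarrow> ('w \<Rightarrow> 'v \<Rightarrow> real) \<Rightarrow> bool" where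
  "witnessed W R e \<longleftrightarrow>
     (\<forall>v\<in>W. \<forall>\<phi>. {u. (v, u) \<in> R} \<noteq> {} \<longrightarrow>
        (\<exists>u. (v, u) \<in> R \<and> ev R e v (Box \<phi>) = ev R e u \<phi>) \<and>
        (\<exists>u. (v, u) \<in> R \<and> ev R e v (Dia \<phi>) = ev R e u \<phi>))"

end

theory Submission
  imports Defs
begin

(* Take the ultrapower of the model along a free ultrafilter U on the naturals: worlds are
   sequences of worlds, f R' g iff f n R g n for U-almost all n, and a variable takes the
   U-limit of its values.  By induction on formulas, the value of every formula at f is the
   U-limit of its values at the f n (Los's theorem).  For Dia, choosing at coordinate n a
   successor within 1/(n+1) of the supremum gives a successor sequence whose value is the
   limit of the Dia values and dominates every other successor, so the supremum is attained;
   freeness of U makes the error 1/(n+1) vanish.  Box reduces to Dia through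
   Box phi = 1 - Dia (phi -> 0).  Constant sequences embed the original model. *)

section \<open>Ultrafilters\<close>

definition ultrafilter :: "'a filter \<Rightarrow> bool" where
  "ultrafilter F \<longleftrightarrow> F \<noteq> bot \<and> (\<forall>P. eventually P F \<or> eventually (\<lambda>x. \<not> P x) F)"

lemma ex_ultrafilter_le:
  fixes F :: "'a filter"
  assumes "F \<noteq> bot"
  shows "\<exists>U. ultrafilter U \<and> U \<le> F"
proof -
  define A where "A = {G. G \<noteq> bot \<and> G \<le> F}"
  have "\<exists>U\<in>A. \<forall>G\<in>A. G \<le> U \<longrightarrow> G = U"
  proof (rule predicate_Zorn[where P = "\<lambda>G H. H \<le> G"])
    show "partial_order_on A (relation_of (\<lambda>G H. H \<le> G) A)"
      by (rule partial_order_on_relation_ofI) auto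
  next
    fix C assume C: "C \<in> Chains (relation_of (\<lambda>G H. H \<le> G) A)"
    show "\<exists>U\<in>A. \<forall>G\<in>C. U \<le> G"
    proof (cases "C = {}")
      case True
      then show ?thesis using assms by (auto simp: A_def)
    next
      case False
      have CA: "C \<subseteq> A" by (rule Chains_relation_of[OF C])
      have directed: "\<exists>K\<in>C. K \<le> inf G H" if "G \<in> C" "H \<in> C" for G H
      proof -
        have "H \<le> G \<or> G \<le> H" using C that unfolding Chains_def relation_of_def by auto
        then show ?thesis using that by (auto intro: bexI[of _ H] bexI[of _ G])
      qed
      have "\<not> eventually (\<lambda>x. False) (Inf C)"
        using CA by (auto simp: eventually_Inf_base[OF False directed] A_def trivial_limit_def)
      moreover obtain G where "G \<in> C" using False by auto
      ultimately have "Inf C \<in> A"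
        using CA Inf_lower[of G C] by (auto simp: A_def trivial_limit_def intro: order_trans)
      then show ?thesis by (auto intro: Inf_lower)
    qed
  qed
  then obtain U where U: "U \<in> A" and max: "\<And>G. G \<in> A \<Longrightarrow> G \<le> U \<Longrightarrow> G = U" by blast
  have "eventually P U \<or> eventually (\<lambda>x. \<not> P x) U" for P
  proof (rule disjCI)
    assume "\<not> eventually (\<lambda>x. \<not> P x) U"
    then have "inf U (principal {x. P x}) \<in> A"
      using U by (auto simp: A_def trivial_limit_def eventually_inf_principal intro: le_infI1)
    then have "inf U (principal {x. P x}) = U" by (rule max) simp
    then show "eventually P U"
      using eventually_inf_principal[of P U "{x. P x}"] by simp
  qed
  then show ?thesis using U by (auto simp: ultrafilter_def A_def)
qed

lemma ultrafilter_not_eventually: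
  "ultrafilter F \<Longrightarrow> \<not> eventually P F \<longleftrightarrow> eventually (\<lambda>x. \<not> P x) F"
  unfolding ultrafilter_def using eventually_conj[of P F "\<lambda>x. \<not> P x"]
  by (auto simp: eventually_False)

lemma ultrafilter_tendsto_exists:
  fixes x :: "'a \<Rightarrow> real"
  assumes U: "ultrafilter U" and bounds: "eventually (\<lambda>i. a \<le> x i \<and> x i \<le> b) U"
  shows "\<exists>L. (x \<longlongrightarrow> L) U"
proof -
  define S where "S = {r. eventually (\<lambda>i. r \<le> x i) U}"
  have "a \<in> S" using bounds unfolding S_def by (auto elim: eventually_mono)
  moreover have "bdd_above S"
  proof (rule bdd_aboveI)
    fix r assume "r \<in> S"
    with bounds have "eventually (\<lambda>i. r \<le> b) U" unfolding S_def
      by (auto elim: eventually_elim2)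
    then show "r \<le> b" using U by (auto simp: ultrafilter_def)
  qed
  ultimately have "(x \<longlongrightarrow> Sup S) U"
  proof (intro order_tendstoI)
    fix c assume "c < Sup S"
    then obtain r where "r \<in> S" "c < r" using less_cSup_iff[of S c] \<open>a \<in> S\<close> \<open>bdd_above S\<close> by auto
    then show "eventually (\<lambda>i. c < x i) U" unfolding S_def by (auto elim: eventually_mono)
  next
    fix c assume "Sup S < c"
    then have "c \<notin> S" using cSup_upper[OF _ \<open>bdd_above S\<close>] by force
    then show "eventually (\<lambda>i. x i < c) U"
      using ultrafilter_not_eventually[OF U] unfolding S_def by (simp add: not_le)
  qed
  then show ?thesis by blast
qed

lemma SUP_approx_seq:
  fixes a :: "'a \<Rightarrow> real"
  assumes "\<And>n. S n \<noteq> {}" and "\<And>n. bdd_above (a ` S n)"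
  shows "\<exists>g. (\<forall>n. g n \<in> S n) \<and> (\<lambda>n. (SUP u\<in>S n. a u) - a (g n)) \<longlonglongrightarrow> 0"
proof -
  have "\<exists>u\<in>S n. (SUP u\<in>S n. a u) - inverse (real (Suc n)) < a u" for n
    by (subst less_cSUP_iff[OF assms(1,2), symmetric]) simp
  then have "\<forall>n. \<exists>u. u \<in> S n \<and> (SUP u\<in>S n. a u) - inverse (real (Suc n)) < a u"
    by blast
  then obtain g where g: "\<And>n. g n \<in> S n"
    and close: "\<And>n. (SUP u\<in>S n. a u) - inverse (real (Suc n)) < a (g n)"
    by (auto dest!: choice)
  have "(\<lambda>n. (SUP u\<in>S n. a u) - a (g n)) \<longlonglongrightarrow> 0"
  proof (rule tendsto_sandwich[OF _ _ tendsto_const LIMSEQ_inverse_real_of_nat])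
    show "\<forall>\<^sub>F n in sequentially. 0 \<le> (SUP u\<in>S n. a u) - a (g n)"
      using cSUP_upper[OF g assms(2)] by simp
    show "\<forall>\<^sub>F n in sequentially. (SUP u\<in>S n. a u) - a (g n) \<le> inverse (real (Suc n))"
      using close by (simp add: less_imp_le algebra_simps)
  qed
  with g show ?thesis by blast
qed

section \<open>Values in Kripke models\<close>

lemma ev_in_unit_interval:
  assumes model: "kripke_model W R e" and "w \<in> W"
  shows "ev R e w \<phi> \<in> {0..1}"
  using \<open>w \<in> W\<close>
proof (induction \<phi> arbitrary: w)
  case (Var p)
  then show ?case using model by (auto simp: kripke_model_def)
next
  case (Box \<phi>)
  define S where "S = {u. (w, u) \<in> R}"
  have vals: "ev R e u \<phi> \<in> {0..1}" if "u \<in> S" for u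
    using Box.IH model that by (auto simp: S_def kripke_model_def)
  show ?case
  proof (cases "S = {}")
    case False
    then obtain u where "u \<in> S" by auto
    have "0 \<le> (INF u\<in>S. ev R e u \<phi>)" using False vals by (auto intro: cINF_greatest)
    moreover have "(INF u\<in>S. ev R e u \<phi>) \<le> ev R e u \<phi>"
      using vals \<open>u \<in> S\<close> by (intro cINF_lower bdd_belowI2[of _ 0]) auto
    ultimately show ?thesis using False vals[OF \<open>u \<in> S\<close>] by (simp add: S_def[symmetric])
  qed (simp add: S_def)
next
  case (Dia \<phi>)
  define S where "S = {u. (w, u) \<in> R}"
  have vals: "ev R e u \<phi> \<in> {0..1}" if "u \<in> S" for u
    using Dia.IH model that by (auto simp: S_def kripke_model_def)
  show ?case
  proof (cases "S = {}")
    case False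
    then obtain u where "u \<in> S" by auto
    have "(SUP u\<in>S. ev R e u \<phi>) \<le> 1" using False vals by (auto intro: cSUP_least)
    moreover have "ev R e u \<phi> \<le> (SUP u\<in>S. ev R e u \<phi>)"
      using vals \<open>u \<in> S\<close> by (intro cSUP_upper bdd_aboveI2[of _ _ 1]) auto
    ultimately show ?thesis using False vals[OF \<open>u \<in> S\<close>] by (simp add: S_def[symmetric])
  qed (simp add: S_def)
qed (auto simp: min_def max_def, smt (verit))

lemma SUP_one_minus:
  fixes a :: "'a \<Rightarrow> real"
  assumes "S \<noteq> {}" and bdd: "bdd_below (a ` S)"
  shows "(SUP u\<in>S. 1 - a u) = 1 - (INF u\<in>S. a u)"
proof (rule antisym)
  show "(SUP u\<in>S. 1 - a u) \<le> 1 - (INF u\<in>S. a u)"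
    using assms by (intro cSUP_least) (auto intro: cINF_lower)
  obtain m where "\<And>u. u \<in> S \<Longrightarrow> m \<le> a u" using bdd by (auto simp: bdd_below_def)
  then have "bdd_above ((\<lambda>u. 1 - a u) ` S)" by (intro bdd_aboveI2[of _ _ "1 - m"]) force
  then have "1 - (SUP u\<in>S. 1 - a u) \<le> (INF u\<in>S. a u)"
    using assms(1) by (intro cINF_greatest) (auto dest: cSUP_upper)
  then show "1 - (INF u\<in>S. a u) \<le> (SUP u\<in>S. 1 - a u)" by simp
qed

lemma ev_Box_dual:
  assumes model: "kripke_model W R e" and "w \<in> W"
  shows "ev R e w (Box \<phi>) = 1 - ev R e w (Dia (Imp \<phi> Zero))"
proof (cases "{u. (w, u) \<in> R} = {}")
  case False
  define S where "S = {u. (w, u) \<in> R}"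
  have vals: "ev R e u \<phi> \<in> {0..1}" if "u \<in> S" for u
  proof -
    have "u \<in> W" using model that by (auto simp: S_def kripke_model_def)
    then show ?thesis by (rule ev_in_unit_interval[OF model])
  qed
  then have "(SUP u\<in>S. ev R e u (Imp \<phi> Zero)) = (SUP u\<in>S. 1 - ev R e u \<phi>)"
    by (intro SUP_cong) auto
  also have "\<dots> = 1 - (INF u\<in>S. ev R e u \<phi>)"
    using False vals by (intro SUP_one_minus bdd_belowI2[of _ 0]) (auto simp: S_def)
  finally show ?thesis using False by (simp only: ev.simps S_def if_False)
qed simp

lemma ev_Dia_attained:
  assumes "(w, u) \<in> R" and "\<And>u'. (w, u') \<in> R \<Longrightarrow> ev R e u' \<phi> \<le> ev R e u \<phi>"
  shows "ev R e w (Dia \<phi>) = ev R e u \<phi>"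
proof -
  have "(SUP u'\<in>{u'. (w, u') \<in> R}. ev R e u' \<phi>) = ev R e u \<phi>"
    using assms by (intro cSup_eq_maximum) auto
  then show ?thesis using assms(1) by auto
qed

lemma ev_le_Dia:
  assumes model: "kripke_model W R e" and "(w, u) \<in> R"
  shows "ev R e u \<phi> \<le> ev R e w (Dia \<phi>)"
proof -
  have "ev R e u' \<phi> \<le> 1" if "(w, u') \<in> R" for u'
    using ev_in_unit_interval[OF model] model that by (auto simp: kripke_model_def)
  then have "ev R e u \<phi> \<le> (SUP u'\<in>{u'. (w, u') \<in> R}. ev R e u' \<phi>)"
    using assms(2) by (intro cSUP_upper bdd_aboveI2[of _ _ 1]) auto
  then show ?thesis using assms(2) by auto
qed

lemma Box_witness_from_Dia_witness:
  assumes model: "kripke_model W R e" and "w \<in> W" and "(w, u) \<in> R"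
    and "ev R e w (Dia (Imp \<phi> Zero)) = ev R e u (Imp \<phi> Zero)"
  shows "ev R e w (Box \<phi>) = ev R e u \<phi>"
proof -
  have "u \<in> W" using model assms(3) by (auto simp: kripke_model_def)
  then have "ev R e u \<phi> \<in> {0..1}" by (rule ev_in_unit_interval[OF model])
  then show ?thesis using ev_Box_dual[OF model \<open>w \<in> W\<close>] assms(4) by simp
qed

section \<open>The ultrapower\<close>

locale ultrapower =
  fixes U :: "nat filter" and W :: "'w set" and R :: "('w \<times> 'w) set" and e :: "'w \<Rightarrow> 'v \<Rightarrow> real"
  assumes ultra: "ultrafilter U" and free: "U \<le> sequentially" and model: "kripke_model W R e"
begin

definition ult_worlds :: "(nat \<Rightarrow> 'w) set" where
  "ult_worlds = {f. \<forall>n. f n \<in> W}"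

definition ult_rel :: "((nat \<Rightarrow> 'w) \<times> (nat \<Rightarrow> 'w)) set" where
  "ult_rel = {(f, g). f \<in> ult_worlds \<and> g \<in> ult_worlds \<and> eventually (\<lambda>n. (f n, g n) \<in> R) U}"

definition ult_val :: "(nat \<Rightarrow> 'w) \<Rightarrow> 'v \<Rightarrow> real" where
  "ult_val f p = Lim U (\<lambda>n. e (f n) p)"

lemma U_ne_bot: "U \<noteq> bot"
  using ultra by (simp add: ultrafilter_def)

lemma R_worlds: "(w, u) \<in> R \<Longrightarrow> w \<in> W \<and> u \<in> W"
  using model by (auto simp: kripke_model_def)

lemma tendsto_ult_val:
  assumes "f \<in> ult_worlds"
  shows "((\<lambda>n. e (f n) p) \<longlongrightarrow> ult_val f p) U"
proof -
  have "eventually (\<lambda>n. 0 \<le> e (f n) p \<and> e (f n) p \<le> 1) U"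
    using assms model by (simp add: ult_worlds_def kripke_model_def)
  then obtain L where "((\<lambda>n. e (f n) p) \<longlongrightarrow> L) U"
    using ultrafilter_tendsto_exists[OF ultra] by meson
  then show ?thesis using U_ne_bot by (simp add: ult_val_def tendsto_Lim)
qed

lemma kripke_model_ult: "kripke_model ult_worlds ult_rel ult_val"
proof -
  obtain w where "w \<in> W" using model by (auto simp: kripke_model_def)
  then have "(\<lambda>n. w) \<in> ult_worlds" by (simp add: ult_worlds_def)
  moreover have "0 \<le> ult_val f p \<and> ult_val f p \<le> 1" if "f \<in> ult_worlds" for f p
  proof -
    have bounds: "0 \<le> e (f n) p \<and> e (f n) p \<le> 1" for n
      using that model by (simp add: ult_worlds_def kripke_model_def)
    show ?thesis
      using tendsto_lowerbound[OF tendsto_ult_val[OF that] _ U_ne_bot]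
        tendsto_upperbound[OF tendsto_ult_val[OF that] _ U_ne_bot] bounds by simp
  qed
  ultimately show ?thesis unfolding kripke_model_def ult_rel_def by blast
qed

lemma ex_ult_successor_max:
  assumes IH: "\<And>g. g \<in> ult_worlds \<Longrightarrow> ((\<lambda>n. ev R e (g n) \<phi>) \<longlongrightarrow> ev ult_rel ult_val g \<phi>) U"
    and f: "f \<in> ult_worlds" and succ: "eventually (\<lambda>n. \<exists>u. (f n, u) \<in> R) U"
  shows "\<exists>g. (f, g) \<in> ult_rel \<and> ((\<lambda>n. ev R e (f n) (Dia \<phi>)) \<longlongrightarrow> ev ult_rel ult_val g \<phi>) U \<and>
             (\<forall>g'. (f, g') \<in> ult_rel \<longrightarrow> ev ult_rel ult_val g' \<phi> \<le> ev ult_rel ult_val g \<phi>)"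
proof -
  (* The padding {f n} only affects coordinates without successors, which U ignores. *)
  define S where "S n = (if \<exists>u. (f n, u) \<in> R then {u. (f n, u) \<in> R} else {f n})" for n
  have S_W: "S n \<subseteq> W" for n using f R_worlds by (auto simp: S_def ult_worlds_def)
  have bdd: "bdd_above ((\<lambda>u. ev R e u \<phi>) ` S n)" for n
  proof (rule bdd_aboveI2)
    fix u assume "u \<in> S n"
    then show "ev R e u \<phi> \<le> 1" using S_W ev_in_unit_interval[OF model, of u \<phi>] by auto
  qed
  have "S n \<noteq> {}" for n by (simp add: S_def)
  with bdd obtain g where gS: "\<And>n. g n \<in> S n"
    and approx: "(\<lambda>n. (SUP u\<in>S n. ev R e u \<phi>) - ev R e (g n) \<phi>) \<longlonglongrightarrow> 0"
    using SUP_approx_seq[of S "\<lambda>u. ev R e u \<phi>"] by blast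
  have g: "g \<in> ult_worlds" using gS S_W by (auto simp: ult_worlds_def)
  have "eventually (\<lambda>n. (f n, g n) \<in> R) U"
  proof (rule eventually_mono[OF succ])
    show "(f n, g n) \<in> R" if "\<exists>u. (f n, u) \<in> R" for n
      using gS[of n] that by (simp add: S_def)
  qed
  with f g have fg: "(f, g) \<in> ult_rel" by (simp add: ult_rel_def)
  have "((\<lambda>n. ((SUP u\<in>S n. ev R e u \<phi>) - ev R e (g n) \<phi>) + ev R e (g n) \<phi>)
          \<longlongrightarrow> 0 + ev ult_rel ult_val g \<phi>) U"
    by (intro tendsto_add tendsto_mono[OF free approx] IH[OF g])
  moreover have "eventually (\<lambda>n. ((SUP u\<in>S n. ev R e u \<phi>) - ev R e (g n) \<phi>) + ev R e (g n) \<phi>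
                   = ev R e (f n) (Dia \<phi>)) U"
    using succ by (rule eventually_mono) (auto simp: S_def)
  ultimately have lim: "((\<lambda>n. ev R e (f n) (Dia \<phi>)) \<longlongrightarrow> ev ult_rel ult_val g \<phi>) U"
    by (simp add: tendsto_cong)
  have "ev ult_rel ult_val g' \<phi> \<le> ev ult_rel ult_val g \<phi>" if "(f, g') \<in> ult_rel" for g'
  proof (rule tendsto_le[OF U_ne_bot lim IH])
    show "g' \<in> ult_worlds" using that by (simp add: ult_rel_def)
    have "eventually (\<lambda>n. (f n, g' n) \<in> R) U" using that by (simp add: ult_rel_def)
    then show "eventually (\<lambda>n. ev R e (g' n) \<phi> \<le> ev R e (f n) (Dia \<phi>)) U"
      by (rule eventually_mono) (rule ev_le_Dia[OF model])
  qed
  with fg lim show ?thesis by blast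
qed

lemma tendsto_ev_Dia:
  assumes IH: "\<And>g. g \<in> ult_worlds \<Longrightarrow> ((\<lambda>n. ev R e (g n) \<phi>) \<longlongrightarrow> ev ult_rel ult_val g \<phi>) U"
    and f: "f \<in> ult_worlds"
  shows "((\<lambda>n. ev R e (f n) (Dia \<phi>)) \<longlongrightarrow> ev ult_rel ult_val f (Dia \<phi>)) U"
proof (cases "eventually (\<lambda>n. \<exists>u. (f n, u) \<in> R) U")
  case True
  then obtain g where fg: "(f, g) \<in> ult_rel"
    and lim: "((\<lambda>n. ev R e (f n) (Dia \<phi>)) \<longlongrightarrow> ev ult_rel ult_val g \<phi>) U"
    and max: "\<And>g'. (f, g') \<in> ult_rel \<Longrightarrow> ev ult_rel ult_val g' \<phi> \<le> ev ult_rel ult_val g \<phi>"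
    using ex_ult_successor_max[OF IH f] by blast
  have "ev ult_rel ult_val f (Dia \<phi>) = ev ult_rel ult_val g \<phi>"
    using fg max by (rule ev_Dia_attained)
  with lim show ?thesis by (simp only:)
next
  case False
  then have none: "eventually (\<lambda>n. \<forall>u. (f n, u) \<notin> R) U"
    using ultrafilter_not_eventually[OF ultra] by simp
  have "(f, g) \<notin> ult_rel" for g
  proof
    assume "(f, g) \<in> ult_rel"
    then have "eventually (\<lambda>n. (f n, g n) \<in> R) U" by (simp add: ult_rel_def)
    with none have "eventually (\<lambda>n. False) U" by (auto elim: eventually_elim2)
    then show False using U_ne_bot by simp
  qed
  moreover have "eventually (\<lambda>n. ev R e (f n) (Dia \<phi>) = 0) U"
    using none by (rule eventually_mono) simp
  ultimately show ?thesis by (simp add: tendsto_eventually)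
qed

lemma tendsto_ev_ult:
  "f \<in> ult_worlds \<Longrightarrow> ((\<lambda>n. ev R e (f n) \<phi>) \<longlongrightarrow> ev ult_rel ult_val f \<phi>) U"
proof (induction \<phi> arbitrary: f)
  case (Var p)
  then show ?case by (simp add: tendsto_ult_val)
next
  case (Dia \<phi>)
  then show ?case by (rule tendsto_ev_Dia)
next
  case (Box \<phi>)
  have "((\<lambda>n. ev R e (g n) (Imp \<phi> Zero)) \<longlongrightarrow> ev ult_rel ult_val g (Imp \<phi> Zero)) U"
    if "g \<in> ult_worlds" for g
    using Box.IH[OF that] by (simp add: tendsto_min tendsto_diff)
  from tendsto_ev_Dia[OF this Box.prems]
  have lim: "((\<lambda>n. 1 - ev R e (f n) (Dia (Imp \<phi> Zero))) \<longlongrightarrow>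
          1 - ev ult_rel ult_val f (Dia (Imp \<phi> Zero))) U"
    by (intro tendsto_diff tendsto_const)
  have "f n \<in> W" for n using Box.prems by (simp add: ult_worlds_def)
  then have "(\<lambda>n. ev R e (f n) (Box \<phi>)) = (\<lambda>n. 1 - ev R e (f n) (Dia (Imp \<phi> Zero)))"
    by (simp only: ev_Box_dual[OF model])
  with lim show ?case by (simp only: ev_Box_dual[OF kripke_model_ult Box.prems])
qed (simp_all add: tendsto_min tendsto_max tendsto_add tendsto_diff)

lemma ult_Dia_witness:
  assumes "(f, g0) \<in> ult_rel"
  shows "\<exists>g. (f, g) \<in> ult_rel \<and> ev ult_rel ult_val f (Dia \<phi>) = ev ult_rel ult_val g \<phi>"
proof -
  have f: "f \<in> ult_worlds" using assms by (simp add: ult_rel_def)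
  have "eventually (\<lambda>n. \<exists>u. (f n, u) \<in> R) U"
    using assms unfolding ult_rel_def by (auto elim: eventually_mono)
  with ex_ult_successor_max[OF tendsto_ev_ult f] obtain g where fg: "(f, g) \<in> ult_rel"
    and "\<And>g'. (f, g') \<in> ult_rel \<Longrightarrow> ev ult_rel ult_val g' \<phi> \<le> ev ult_rel ult_val g \<phi>"
    by blast
  then have "ev ult_rel ult_val f (Dia \<phi>) = ev ult_rel ult_val g \<phi>"
    by (rule ev_Dia_attained)
  with fg show ?thesis by blast
qed

lemma witnessed_ult: "witnessed ult_worlds ult_rel ult_val"
  unfolding witnessed_def
proof (intro ballI allI impI conjI)
  fix f \<phi> assume f: "f \<in> ult_worlds" and "{g. (f, g) \<in> ult_rel} \<noteq> {}"
  then obtain g0 where g0: "(f, g0) \<in> ult_rel" by auto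
  show "\<exists>g. (f, g) \<in> ult_rel \<and> ev ult_rel ult_val f (Dia \<phi>) = ev ult_rel ult_val g \<phi>"
    using ult_Dia_witness[OF g0] .
  obtain g where fg: "(f, g) \<in> ult_rel"
    and "ev ult_rel ult_val f (Dia (Imp \<phi> Zero)) = ev ult_rel ult_val g (Imp \<phi> Zero)"
    using ult_Dia_witness[OF g0, of "Imp \<phi> Zero"] by blast
  then have "ev ult_rel ult_val f (Box \<phi>) = ev ult_rel ult_val g \<phi>"
    by (rule Box_witness_from_Dia_witness[OF kripke_model_ult f])
  with fg show "\<exists>g. (f, g) \<in> ult_rel \<and> ev ult_rel ult_val f (Box \<phi>) = ev ult_rel ult_val g \<phi>"
    by blast
qed

lemma ev_ult_const:
  assumes "v \<in> W"
  shows "(\<lambda>n. v) \<in> ult_worlds" and "ev ult_rel ult_val (\<lambda>n. v) \<phi> = ev R e v \<phi>"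
proof -
  show v: "(\<lambda>n. v) \<in> ult_worlds" using assms by (simp add: ult_worlds_def)
  show "ev ult_rel ult_val (\<lambda>n. v) \<phi> = ev R e v \<phi>"
    using tendsto_unique[OF U_ne_bot tendsto_ev_ult[OF v] tendsto_const] .
qed

end

theorem mainTheorem3:
  fixes W :: "'w set" and R :: "('w \<times> 'w) set" and e :: "'w \<Rightarrow> 'v \<Rightarrow> real"
  assumes "kripke_model W R e"
  shows "\<exists>(W' :: (nat \<Rightarrow> 'w) set) R' (e' :: (nat \<Rightarrow> 'w) \<Rightarrow> 'v \<Rightarrow> real) h.
           kripke_model W' R' e' \<and> witnessed W' R' e' \<and> (\<forall>v\<in>W. h v \<in> W') \<and>
           (\<forall>v\<in>W. \<forall>\<phi>. ev R e v \<phi> = ev R' e' (h v) \<phi>)"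
proof -
  obtain U :: "nat filter" where "ultrafilter U" "U \<le> sequentially"
    using ex_ultrafilter_le[OF sequentially_bot] by blast
  then interpret ultrapower U W R e
    using assms by unfold_locales
  show ?thesis
    by (intro exI[of _ ult_worlds] exI[of _ ult_rel] exI[of _ ult_val] exI[of _ "\<lambda>v n. v"])
      (simp add: kripke_model_ult witnessed_ult ev_ult_const)
qed

end
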